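(* Let $p>1$ and $x\in(0,1)$. The functions $k\mapsto(\arcsin_p(x^k))^{1/k}$ and $k\mapsto(\operatorname{artanh}_p(x^k))^{1/k}$ are decreasing on $(0,\infty)$, and the functions $k\mapsto(\arctan_p(x^k))^{1/k}$ and $k\mapsto(\operatorname{arsinh}_p(x^k))^{1/k}$ are increasing on $(0,\infty)$. In particular, for $k\ge1$, $$\sqrt[k]{\arcsin_p(x^k)}\le\arcsin_p(x)\le(\arcsin_p\sqrt[k]{x})^k,\qquad \sqrt[k]{\operatorname{artanh}_p(x^k)}\le\operatorname{artanh}_p(x)\le(\operatorname{artanh}_p\sqrt[k]{x})^k,$$ $$(\operatorname{arsinh}_p\sqrt[k]{x})^k\le\operatorname{arsinh}_p(x)\le\sqrt[k]{\operatorname{arsinh}_p(x^k)},\qquad (\arctan_p\sqrt[k]{x})^k\le\arctan_p(x)\le\sqrt[k]{\arctan_p(x^k)}.$$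
   Context: For $p>1$ and $y\in(0,1)$: $\arcsin_p y=\int_0^y(1-t^p)^{-1/p}dt$, $\arctan_p y=\int_0^y(1+t^p)^{-1}dt$, $\operatorname{arsinh}_p y=\int_0^y(1+t^p)^{-1/p}dt$, $\operatorname{artanh}_p y=\int_0^y(1-t^p)^{-1}dt$. *)

theory Defs
  imports "HOL-Analysis.Analysis"
begin

definition arcsin_p :: "real \<Rightarrow> real \<Rightarrow> real" where
  "arcsin_p p y = integral {0..y} (\<lambda>t. (1 - t powr p) powr (-1/p))"

definition arctan_p :: "real \<Rightarrow> real \<Rightarrow> real" where
  "arctan_p p y = integral {0..y} (\<lambda>t. 1 / (1 + t powr p))"

definition arsinh_p :: "real \<Rightarrow> real \<Rightarrow> real" where
  "arsinh_p p y = integral {0..y} (\<lambda>t. (1 + t powr p) powr (-1/p))"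

definition artanh_p :: "real \<Rightarrow> real \<Rightarrow> real" where
  "artanh_p p y = integral {0..y} (\<lambda>t. 1 / (1 - t powr p))"

end

theory Submission
  imports Defs
begin

text \<open>
  With \<open>F y = \<integral>\<^sub>0\<^sup>y g\<close> one has \<open>F (x\<^sup>k)\<^sup>1\<^sup>/\<^sup>k = x \<cdot> (F (x\<^sup>k) / x\<^sup>k)\<^sup>1\<^sup>/\<^sup>k\<close>.
  The mean \<open>F y / y\<close> of a monotone integrand is monotone in \<open>y\<close> and lies on the same side
  of \<open>g 0 = 1\<close> as \<open>g\<close>. As \<open>k\<close> grows, \<open>x\<^sup>k\<close> decreases and the exponent \<open>1/k\<close> shrinks,
  and both effects move \<open>(F (x\<^sup>k) / x\<^sup>k)\<^sup>1\<^sup>/\<^sup>k\<close> in the same direction: down for the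
  increasing integrands of \<open>arcsin\<^sub>p\<close> and \<open>artanh\<^sub>p\<close>, up for the decreasing (positive)
  integrands of \<open>arctan\<^sub>p\<close> and \<open>arsinh\<^sub>p\<close>. The bounds for \<open>k \<ge> 1\<close> compare the
  exponents \<open>1/k \<le> 1 \<le> k\<close>.
\<close>

lemma integral_ge_of_mono_on:
  fixes g :: "real \<Rightarrow> real"
  assumes "continuous_on {0..y} g" "mono_on {0..y} g" "0 \<le> y"
  shows "y * g 0 \<le> integral {0..y} g"
proof -
  have "integral {0..y} (\<lambda>_. g 0) \<le> integral {0..y} g"
    using assms by (intro integral_le integrable_continuous_interval) (auto simp: monotone_on_def)
  with assms(3) show ?thesis by (simp add: mult.commute)
qed

lemma integral_mean_mono:
  fixes g :: "real \<Rightarrow> real"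
  assumes cont: "continuous_on {0..b} g" and mono: "mono_on {0..b} g" and ab: "0 < a" "a \<le> b"
  shows "integral {0..a} g / a \<le> integral {0..b} g / b"
proof -
  have int: "g integrable_on {0..a}" "g integrable_on {a..b}"
    using ab by (auto intro!: integrable_continuous_interval continuous_on_subset[OF cont])
  have split: "integral {0..b} g = integral {0..a} g + integral {a..b} g"
    using Henstock_Kurzweil_Integration.integral_combine[of 0 a b g] ab
    by (simp add: integrable_continuous_interval cont)
  have head: "integral {0..a} g \<le> a * g a"
    using integral_le[OF int(1), of "\<lambda>_. g a"] ab mono
    by (auto simp: monotone_on_def mult.commute)
  have tail: "(b - a) * g a \<le> integral {a..b} g"
    using integral_le[OF _ int(2), of "\<lambda>_. g a"] ab mono
    by (auto simp: monotone_on_def mult.commute)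
  have "b * integral {0..a} g = a * integral {0..a} g + (b - a) * integral {0..a} g"
    by (simp add: algebra_simps)
  also have "\<dots> \<le> a * integral {0..a} g + (b - a) * (a * g a)"
    using head ab by (intro add_left_mono mult_left_mono) auto
  also have "\<dots> \<le> a * integral {0..a} g + a * integral {a..b} g"
    using mult_left_mono[OF tail, of a] ab by (simp add: algebra_simps)
  also have "\<dots> = a * integral {0..b} g"
    by (simp add: split algebra_simps)
  finally show ?thesis
    using ab by (simp add: divide_simps mult.commute)
qed

lemma antimono_on_root_of_mono_on:
  fixes q :: "real \<Rightarrow> real"
  assumes mono: "mono_on {0<..<1} q" and ge: "\<And>y. 0 < y \<Longrightarrow> y < 1 \<Longrightarrow> 1 \<le> q y"
    and x: "0 < x" "x < 1"
  shows "antimono_on {0<..} (\<lambda>k. q (x powr k) powr (1/k))"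
proof (rule monotone_onI)
  fix k l :: real assume kl: "k \<in> {0<..}" "l \<in> {0<..}" "k \<le> l"
  have unit: "x powr k \<in> {0<..<1}" "x powr l \<in> {0<..<1}"
    using x kl by (auto simp: powr01_less_one)
  have "q (x powr l) powr (1/l) \<le> q (x powr l) powr (1/k)"
    using ge unit kl by (intro powr_mono) (auto simp: divide_simps)
  also have "\<dots> \<le> q (x powr k) powr (1/k)"
    using mono unit kl x ge[of "x powr l"] by (intro powr_mono2) (auto simp: monotone_on_def powr_mono')
  finally show "q (x powr l) powr (1/l) \<le> q (x powr k) powr (1/k)" .
qed

lemma mono_on_root_of_antimono_on:
  fixes q :: "real \<Rightarrow> real"
  assumes anti: "antimono_on {0<..<1} q" and unit_q: "\<And>y. 0 < y \<Longrightarrow> y < 1 \<Longrightarrow> q y \<in> {0..1}"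
    and x: "0 < x" "x < 1"
  shows "mono_on {0<..} (\<lambda>k. q (x powr k) powr (1/k))"
proof (rule monotone_onI)
  fix k l :: real assume kl: "k \<in> {0<..}" "l \<in> {0<..}" "k \<le> l"
  have unit: "x powr k \<in> {0<..<1}" "x powr l \<in> {0<..<1}"
    using x kl by (auto simp: powr01_less_one)
  have "q (x powr k) powr (1/k) \<le> q (x powr l) powr (1/k)"
    using anti unit kl x unit_q[of "x powr k"] by (intro powr_mono2) (auto simp: monotone_on_def powr_mono')
  also have "\<dots> \<le> q (x powr l) powr (1/l)"
    using unit_q unit kl by (intro powr_mono') (auto simp: divide_simps)
  finally show "q (x powr k) powr (1/k) \<le> q (x powr l) powr (1/l)" .
qed

lemma root_eq_ratio_root:
  fixes F :: "real \<Rightarrow> real"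
  assumes "0 < x" "0 < k" "0 \<le> F (x powr k)"
  shows "F (x powr k) powr (1/k) = x * (F (x powr k) / x powr k) powr (1/k)"
proof -
  have "F (x powr k) powr (1/k) = ((F (x powr k) / x powr k) * x powr k) powr (1/k)"
    using assms(1) by simp
  also have "\<dots> = (F (x powr k) / x powr k) powr (1/k) * (x powr k) powr (1/k)"
    by (rule powr_mult)
  also have "(x powr k) powr (1/k) = x"
    using assms by (simp add: powr_powr)
  finally show ?thesis by simp
qed

lemma root_bounds_of_antimono_on:
  fixes F :: "real \<Rightarrow> real"
  assumes anti: "antimono_on {0<..} (\<lambda>k. F (x powr k) powr (1/k))"
    and "0 < x" "0 \<le> F x" "1 \<le> k"
  shows "F (x powr k) powr (1/k) \<le> F x \<and> F x \<le> F (x powr (1/k)) powr k"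
  using monotone_onD[OF anti, of 1 k] monotone_onD[OF anti, of "1/k" 1] assms(2-) by simp

lemma root_bounds_of_mono_on:
  fixes F :: "real \<Rightarrow> real"
  assumes mono: "mono_on {0<..} (\<lambda>k. F (x powr k) powr (1/k))"
    and "0 < x" "0 \<le> F x" "1 \<le> k"
  shows "F (x powr (1/k)) powr k \<le> F x \<and> F x \<le> F (x powr k) powr (1/k)"
  using monotone_onD[OF mono, of 1 k] monotone_onD[OF mono, of "1/k" 1] assms(2-) by simp

lemma integral_root_antimono_on:
  fixes g :: "real \<Rightarrow> real"
  assumes cont: "continuous_on {0..<1} g" and mono: "mono_on {0..<1} g" and g0: "1 \<le> g 0"
    and x: "0 < x" "x < 1"
  shows "antimono_on {0<..} (\<lambda>k. integral {0..x powr k} g powr (1/k))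
    \<and> (\<forall>k\<ge>1. integral {0..x powr k} g powr (1/k) \<le> integral {0..x} g
              \<and> integral {0..x} g \<le> integral {0..x powr (1/k)} g powr k)"
proof -
  define q where "q y = integral {0..y} g / y" for y
  have sub: "{0..y} \<subseteq> {0..<1}" if "y < 1" for y :: real
    using that by auto
  have ge: "y \<le> integral {0..y} g" if "0 < y" "y < 1" for y
  proof -
    have "y \<le> y * g 0"
      using g0 that by simp
    also have "\<dots> \<le> integral {0..y} g"
      using that by (intro integral_ge_of_mono_on continuous_on_subset[OF cont sub]
          mono_on_subset[OF mono sub]) auto
    finally show ?thesis .
  qed
  then have nonneg: "0 \<le> integral {0..y} g" if "0 < y" "y < 1" for y
    using that by fastforce
  have "mono_on {0<..<1} q"
    using integral_mean_mono continuous_on_subset[OF cont sub] mono_on_subset[OF mono sub]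
    by (auto simp: q_def intro!: monotone_onI)
  moreover have "1 \<le> q y" if "0 < y" "y < 1" for y
    using ge[OF that] that by (simp add: q_def)
  ultimately have ratio: "antimono_on {0<..} (\<lambda>k. q (x powr k) powr (1/k))"
    using antimono_on_root_of_mono_on x by blast
  have "integral {0..x powr k} g powr (1/k) = x * q (x powr k) powr (1/k)" if "0 < k" for k
    using root_eq_ratio_root[of x k "\<lambda>y. integral {0..y} g"] nonneg[of "x powr k"] x that
    by (simp add: q_def powr01_less_one)
  then have anti: "antimono_on {0<..} (\<lambda>k. integral {0..x powr k} g powr (1/k))"
    using monotone_onD[OF ratio] x by (intro monotone_onI) auto
  with nonneg[OF x] x show ?thesis
    using root_bounds_of_antimono_on[OF anti] by blast
qed

lemma integral_root_mono_on:
  fixes g :: "real \<Rightarrow> real"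
  assumes cont: "continuous_on {0..<1} g" and anti: "antimono_on {0..<1} g" and g0: "g 0 \<le> 1"
    and nonneg_g: "\<And>t. 0 \<le> t \<Longrightarrow> t < 1 \<Longrightarrow> 0 \<le> g t" and x: "0 < x" "x < 1"
  shows "mono_on {0<..} (\<lambda>k. integral {0..x powr k} g powr (1/k))
    \<and> (\<forall>k\<ge>1. integral {0..x powr (1/k)} g powr k \<le> integral {0..x} g
              \<and> integral {0..x} g \<le> integral {0..x powr k} g powr (1/k))"
proof -
  define q where "q y = integral {0..y} g / y" for y
  have sub: "{0..y} \<subseteq> {0..<1}" if "y < 1" for y :: real
    using that by auto
  have cont': "continuous_on {0..<1} (\<lambda>t. - g t)" and mono': "mono_on {0..<1} (\<lambda>t. - g t)"
    using cont anti by (auto intro: continuous_intros simp: monotone_on_def)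
  have nonneg: "0 \<le> integral {0..y} g" if "0 < y" "y < 1" for y
    using that nonneg_g
    by (intro integral_nonneg integrable_continuous_interval continuous_on_subset[OF cont sub]) auto
  have le: "integral {0..y} g \<le> y" if "0 < y" "y < 1" for y
  proof -
    have "y * - g 0 \<le> integral {0..y} (\<lambda>t. - g t)"
      using that by (intro integral_ge_of_mono_on continuous_on_subset[OF cont' sub]
          mono_on_subset[OF mono' sub]) auto
    then have "integral {0..y} g \<le> y * g 0"
      by (simp add: integral_neg)
    also have "\<dots> \<le> y"
      using g0 that by (simp add: mult_left_le)
    finally show ?thesis .
  qed
  have "antimono_on {0<..<1} q"
  proof (rule monotone_onI)
    fix a b :: real assume "a \<in> {0<..<1}" "b \<in> {0<..<1}" "a \<le> b"
    then have "integral {0..a} (\<lambda>t. - g t) / a \<le> integral {0..b} (\<lambda>t. - g t) / b"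
      by (intro integral_mean_mono continuous_on_subset[OF cont' sub]
          mono_on_subset[OF mono' sub]) auto
    then show "q b \<le> q a"
      by (simp add: q_def integral_neg)
  qed
  moreover have "q y \<in> {0..1}" if "0 < y" "y < 1" for y
    using nonneg[OF that] le[OF that] that by (simp add: q_def)
  ultimately have ratio: "mono_on {0<..} (\<lambda>k. q (x powr k) powr (1/k))"
    using mono_on_root_of_antimono_on x by blast
  have "integral {0..x powr k} g powr (1/k) = x * q (x powr k) powr (1/k)" if "0 < k" for k
    using root_eq_ratio_root[of x k "\<lambda>y. integral {0..y} g"] nonneg[of "x powr k"] x that
    by (simp add: q_def powr01_less_one)
  then have mono: "mono_on {0<..} (\<lambda>k. integral {0..x powr k} g powr (1/k))"
    using monotone_onD[OF ratio] x by (intro monotone_onI) auto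
  with nonneg[OF x] x show ?thesis
    using root_bounds_of_mono_on[OF mono] by blast
qed

lemma powr_less_one_of_nonneg:
  fixes t p :: real
  assumes "0 < p" "0 \<le> t" "t < 1"
  shows "t powr p < 1"
  using assms by (cases "t = 0") (auto simp: powr01_less_one)

lemma continuous_on_trig_p_integrands:
  fixes p :: real
  assumes p: "0 < p"
  shows "continuous_on {0..<1} (\<lambda>t::real. (1 - t powr p) powr (-1/p))"
    and "continuous_on {0..<1} (\<lambda>t::real. 1 / (1 - t powr p))"
    and "continuous_on {0..<1} (\<lambda>t::real. (1 + t powr p) powr (-1/p))"
    and "continuous_on {0..<1} (\<lambda>t::real. 1 / (1 + t powr p))"
proof -
  have pow: "continuous_on {0..<1} (\<lambda>t::real. t powr p)"
    using p by (intro continuous_on_powr') (auto intro: continuous_intros)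
  note lt = powr_less_one_of_nonneg[OF p]
  show "continuous_on {0..<1} (\<lambda>t::real. (1 - t powr p) powr (-1/p))"
    "continuous_on {0..<1} (\<lambda>t::real. 1 / (1 - t powr p))"
    "continuous_on {0..<1} (\<lambda>t::real. (1 + t powr p) powr (-1/p))"
    "continuous_on {0..<1} (\<lambda>t::real. 1 / (1 + t powr p))"
    using lt by (auto intro!: continuous_intros pow simp: add_nonneg_eq_0_iff) (metis less_irrefl)+
qed

lemma monotone_on_trig_p_integrands:
  fixes p :: real
  assumes p: "0 < p"
  shows "mono_on {0..<1} (\<lambda>t::real. (1 - t powr p) powr (-1/p))"
    and "mono_on {0..<1} (\<lambda>t::real. 1 / (1 - t powr p))"
    and "antimono_on {0..<1} (\<lambda>t::real. (1 + t powr p) powr (-1/p))"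
    and "antimono_on {0..<1} (\<lambda>t::real. 1 / (1 + t powr p))"
proof -
  have pow: "s powr p \<le> t powr p" if "0 \<le> s" "s \<le> t" for s t :: real
    using that p by (intro powr_mono2) auto
  note lt = powr_less_one_of_nonneg[OF p]
  show "mono_on {0..<1} (\<lambda>t::real. (1 - t powr p) powr (-1/p))"
    using p pow lt by (intro monotone_onI powr_mono2') (auto simp: divide_simps)
  show "mono_on {0..<1} (\<lambda>t::real. 1 / (1 - t powr p))"
    using pow lt by (intro monotone_onI divide_left_mono mult_pos_pos) auto
  show "antimono_on {0..<1} (\<lambda>t::real. (1 + t powr p) powr (-1/p))"
    using p pow by (intro monotone_onI powr_mono2') (auto simp: divide_simps add_pos_nonneg)
  show "antimono_on {0..<1} (\<lambda>t::real. 1 / (1 + t powr p))"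
    using pow by (intro monotone_onI divide_left_mono mult_pos_pos) (auto simp: add_pos_nonneg)
qed

theorem lemma2p4:
  fixes p x :: real
  assumes "p > 1" and "0 < x" and "x < 1"
  shows "antimono_on {0<..} (\<lambda>k. (arcsin_p p (x powr k)) powr (1/k))
       \<and> antimono_on {0<..} (\<lambda>k. (artanh_p p (x powr k)) powr (1/k))
       \<and> mono_on {0<..} (\<lambda>k. (arctan_p p (x powr k)) powr (1/k))
       \<and> mono_on {0<..} (\<lambda>k. (arsinh_p p (x powr k)) powr (1/k))
       \<and> (\<forall>k::real. k \<ge> 1 \<longrightarrow>
            (arcsin_p p (x powr k)) powr (1/k) \<le> arcsin_p p x
          \<and> arcsin_p p x \<le> (arcsin_p p (x powr (1/k))) powr k
          \<and> (artanh_p p (x powr k)) powr (1/k) \<le> artanh_p p x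
          \<and> artanh_p p x \<le> (artanh_p p (x powr (1/k))) powr k
          \<and> (arsinh_p p (x powr (1/k))) powr k \<le> arsinh_p p x
          \<and> arsinh_p p x \<le> (arsinh_p p (x powr k)) powr (1/k)
          \<and> (arctan_p p (x powr (1/k))) powr k \<le> arctan_p p x
          \<and> arctan_p p x \<le> (arctan_p p (x powr k)) powr (1/k))"
proof -
  have p: "0 < p"
    using assms(1) by simp
  note cont = continuous_on_trig_p_integrands[OF p]
  note mono = monotone_on_trig_p_integrands[OF p]
  have nonneg: "0 \<le> (1 + t powr p) powr (-1/p)" "0 \<le> 1 / (1 + t powr p)" for t :: real
    by (simp_all add: add_nonneg_nonneg)
  note arcsin = integral_root_antimono_on[OF cont(1) mono(1) _ assms(2,3)]
  note artanh = integral_root_antimono_on[OF cont(2) mono(2) _ assms(2,3)]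
  note arsinh = integral_root_mono_on[OF cont(3) mono(3) _ nonneg(1) assms(2,3)]
  note arctan = integral_root_mono_on[OF cont(4) mono(4) _ nonneg(2) assms(2,3)]
  show ?thesis
    unfolding arcsin_p_def artanh_p_def arsinh_p_def arctan_p_def
    using arcsin artanh arsinh arctan p by simp
qed

end
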